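(* For every type $\tau\in\mathbb{T}_C$, the type $\bigcap\mathbb{P}(\tau)$ is organized and $\bigcap\mathbb{P}(\tau)=\tau$.
   Context: Types $\mathbb{T}_C\ni\tau ::= a\mid\alpha\mid\omega\mid\tau_1\to\tau_2\mid\tau_1\cap\tau_2\mid c(\tau)$ ($a$ constants, $\alpha$ type variables, $c$ unary constructors). Subtyping $\le$: least preorder with $\sigma\le\omega$; $\omega\le\omega\to\omega$; $\sigma\cap\tau\le\sigma$; $\sigma\cap\tau\le\tau$; $\sigma\le\tau_1,\sigma\le\tau_2\Rightarrow\sigma\le\tau_1\cap\tau_2$; $(\sigma\to\tau_1)\cap(\sigma\to\tau_2)\le\sigma\to\tau_1\cap\tau_2$; $\sigma_2\le\sigma_1,\tau_1\le\tau_2\Rightarrow\sigma_1\to\tau_1\le\sigma_2\to\tau_2$; $\tau_1\le\tau_2\Rightarrow c(\tau_1)\le c(\tau_2)$; $c(\tau_1)\cap c(\tau_2)\le c(\tau_1\cap\tau_2)$; $=$ means $\le$ in both directions. Paths: $\pi ::= a\mid\alpha\mid\sigma\to\pi\mid c(\omega)\mid c(\pi)$. $\mathbb{P}(a)=\{a\}$, $\mathbb{P}(\alpha)=\{\alpha\}$, $\mathbb{P}(\omega)=\emptyset$, $\mathbb{P}(\sigma\to\tau)=\{\sigma\to\pi\mid\pi\in\mathbb{P}(\tau)\}$, $\mathbb{P}(\sigma\cap\tau)=\mathbb{P}(\sigma)\cup\mathbb{P}(\tau)$, $\mathbb{P}(c(\tau))=\{c(\omega)\}$ if $\mathbb{P}(\tau)=\emptyset$,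 else $\{c(\pi)\mid\pi\in\mathbb{P}(\tau)\}$. A type is organized if it is of the form $\bigcap_{i\in I}\pi_i$ with all $\pi_i$ paths. $\bigcap\mathbb{P}(\tau)$ denotes $\pi_1\cap\cdots\cap\pi_n$ where $\mathbb{P}(\tau)=\{\pi_1,\ldots,\pi_n\}$, and $\omega$ if $\mathbb{P}(\tau)=\emptyset$. *)

theory Defs
  imports Main
begin

datatype ('a, 'v, 'c) ty =
    Const 'a
  | TVar 'v
  | Omega
  | Arr "('a, 'v, 'c) ty" "('a, 'v, 'c) ty"
  | Inter "('a, 'v, 'c) ty" "('a, 'v, 'c) ty"
  | Ctor 'c "('a, 'v, 'c) ty"

inductive sub :: "('a, 'v, 'c) ty \<Rightarrow> ('a, 'v, 'c) ty \<Rightarrow> bool" (infix "\<le>\<^sub>T" 50) where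
  sub_refl: "s \<le>\<^sub>T s"
| sub_trans: "s \<le>\<^sub>T t \<Longrightarrow> t \<le>\<^sub>T u \<Longrightarrow> s \<le>\<^sub>T u"
| sub_omega: "s \<le>\<^sub>T Omega"
| sub_omega_arr: "Omega \<le>\<^sub>T Arr Omega Omega"
| sub_inter1: "Inter s t \<le>\<^sub>T s"
| sub_inter2: "Inter s t \<le>\<^sub>T t"
| sub_glb: "s \<le>\<^sub>T t1 \<Longrightarrow> s \<le>\<^sub>T t2 \<Longrightarrow> s \<le>\<^sub>T Inter t1 t2"
| sub_arr_dist: "Inter (Arr s t1) (Arr s t2) \<le>\<^sub>T Arr s (Inter t1 t2)"
| sub_arr: "s2 \<le>\<^sub>T s1 \<Longrightarrow> t1 \<le>\<^sub>T t2 \<Longrightarrow> Arr s1 t1 \<le>\<^sub>T Arr s2 t2"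
| sub_ctor: "t1 \<le>\<^sub>T t2 \<Longrightarrow> Ctor c t1 \<le>\<^sub>T Ctor c t2"
| sub_ctor_dist: "Inter (Ctor c t1) (Ctor c t2) \<le>\<^sub>T Ctor c (Inter t1 t2)"

definition ty_eq :: "('a, 'v, 'c) ty \<Rightarrow> ('a, 'v, 'c) ty \<Rightarrow> bool" (infix "=\<^sub>T" 50) where
  "s =\<^sub>T t \<longleftrightarrow> s \<le>\<^sub>T t \<and> t \<le>\<^sub>T s"

inductive is_path :: "('a, 'v, 'c) ty \<Rightarrow> bool" where
  path_const: "is_path (Const a)"
| path_var: "is_path (TVar v)"
| path_arr: "is_path p \<Longrightarrow> is_path (Arr s p)"
| path_ctor_omega: "is_path (Ctor c Omega)"
| path_ctor: "is_path p \<Longrightarrow> is_path (Ctor c p)"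

fun paths :: "('a, 'v, 'c) ty \<Rightarrow> ('a, 'v, 'c) ty set" where
  "paths (Const a) = {Const a}"
| "paths (TVar v) = {TVar v}"
| "paths Omega = {}"
| "paths (Arr s t) = Arr s ` paths t"
| "paths (Inter s t) = paths s \<union> paths t"
| "paths (Ctor c t) = (if paths t = {} then {Ctor c Omega} else Ctor c ` paths t)"

fun inter_list :: "('a, 'v, 'c) ty list \<Rightarrow> ('a, 'v, 'c) ty" where
  "inter_list [] = Omega"
| "inter_list [p] = p"
| "inter_list (p # ps) = Inter p (inter_list ps)"

definition organized :: "('a, 'v, 'c) ty \<Rightarrow> bool" where
  "organized t \<longleftrightarrow> (\<exists>ps. (\<forall>p\<in>set ps. is_path p) \<and> t = inter_list ps)"

text \<open>\<Inter>P(t): the intersection of an (arbitrary fixed) enumeration of paths t.\<close>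
definition cap_paths :: "('a, 'v, 'c) ty \<Rightarrow> ('a, 'v, 'c) ty" where
  "cap_paths t = inter_list (SOME ps. distinct ps \<and> set ps = paths t)"

end

theory Submission
  imports Defs
begin

text \<open>Every type lies below each of its paths. Conversely, by induction on \<open>t\<close>, any type below
  all paths of \<open>t\<close> lies below \<open>t\<close>: the arrow and constructor cases use that \<open>\<sigma> \<rightarrow> _\<close> and
  \<open>c(_)\<close> distribute over intersections, and a constructor with no paths underneath only needs
  \<open>c(\<omega>) \<le> c(\<tau>)\<close> for path-free \<open>\<tau>\<close>. Applied to the intersection of the paths this gives both
  inequalities, and organization is immediate since \<open>\<P>(\<tau>)\<close> consists of paths.\<close>

declare sub_trans [trans]

lemma finite_paths: "finite (paths t)"
  by (induction t) auto

lemma is_path_paths: "p \<in> paths t \<Longrightarrow> is_path p"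
  by (induction t arbitrary: p) (auto intro: is_path.intros split: if_splits)

lemma inter_list_le: "p \<in> set ps \<Longrightarrow> inter_list ps \<le>\<^sub>T p"
  by (induction ps rule: inter_list.induct) (auto intro: sub.intros)

lemma le_inter_list: "(\<And>p. p \<in> set ps \<Longrightarrow> s \<le>\<^sub>T p) \<Longrightarrow> s \<le>\<^sub>T inter_list ps"
  by (induction ps rule: inter_list.induct) (auto intro: sub.intros)

lemma le_Arr_inter_list:
  "(\<And>p. p \<in> set ps \<Longrightarrow> s \<le>\<^sub>T Arr a p) \<Longrightarrow> s \<le>\<^sub>T Arr a (inter_list ps)"
proof (induction ps rule: inter_list.induct)
  case 1
  have "s \<le>\<^sub>T Omega" by (rule sub_omega)
  also have "Omega \<le>\<^sub>T Arr Omega Omega" by (rule sub_omega_arr)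
  also have "Arr Omega Omega \<le>\<^sub>T Arr a Omega" by (intro sub_arr sub_omega sub_refl)
  finally show ?case by simp
next
  case (3 p q ps)
  then have "s \<le>\<^sub>T Inter (Arr a p) (Arr a (inter_list (q # ps)))"
    by (auto intro: sub_glb)
  then show ?case by (auto intro: sub_trans sub_arr_dist)
qed auto

lemma le_Ctor_inter_list:
  "ps \<noteq> [] \<Longrightarrow> (\<And>p. p \<in> set ps \<Longrightarrow> s \<le>\<^sub>T Ctor c p) \<Longrightarrow> s \<le>\<^sub>T Ctor c (inter_list ps)"
proof (induction ps rule: inter_list.induct)
  case (3 p q ps)
  then have "s \<le>\<^sub>T Inter (Ctor c p) (Ctor c (inter_list (q # ps)))"
    by (auto intro: sub_glb)
  then show ?case by (auto intro: sub_trans sub_ctor_dist)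
qed auto

lemma le_paths: "p \<in> paths t \<Longrightarrow> t \<le>\<^sub>T p"
  by (induction t arbitrary: p) (auto intro: sub.intros split: if_splits)

lemma le_if_le_paths: "(\<And>p. p \<in> paths t \<Longrightarrow> s \<le>\<^sub>T p) \<Longrightarrow> s \<le>\<^sub>T t"
proof (induction t arbitrary: s)
  case (Arr a t)
  obtain ps where ps: "set ps = paths t"
    using finite_list[OF finite_paths] by blast
  have "s \<le>\<^sub>T Arr a (inter_list ps)"
    using Arr.prems ps by (intro le_Arr_inter_list) auto
  moreover have "inter_list ps \<le>\<^sub>T t"
    using Arr.IH ps inter_list_le by blast
  ultimately show ?case by (meson sub_arr sub_refl sub_trans)
next
  case (Ctor c t)
  show ?case
  proof (cases "paths t = {}")
    case True
    then have "s \<le>\<^sub>T Ctor c Omega" using Ctor.prems by simp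
    moreover have "Omega \<le>\<^sub>T t" using Ctor.IH True by blast
    ultimately show ?thesis by (meson sub_ctor sub_trans)
  next
    case False
    obtain ps where ps: "set ps = paths t"
      using finite_list[OF finite_paths] by blast
    have "s \<le>\<^sub>T Ctor c (inter_list ps)"
      using Ctor.prems ps False by (intro le_Ctor_inter_list) auto
    moreover have "inter_list ps \<le>\<^sub>T t"
      using Ctor.IH ps inter_list_le by blast
    ultimately show ?thesis by (meson sub_ctor sub_trans)
  qed
qed (auto intro: sub.intros)

lemma cap_paths_eq_inter_list: "\<exists>ps. set ps = paths t \<and> cap_paths t = inter_list ps"
proof -
  have "\<exists>ps. distinct ps \<and> set ps = paths t"
    using finite_distinct_list[OF finite_paths] by blast
  then have "set (SOME ps. distinct ps \<and> set ps = paths t) = paths t"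
    by (metis (mono_tags, lifting) someI_ex)
  then show ?thesis unfolding cap_paths_def by blast
qed

theorem lemma4p8:
  fixes t :: "('a, 'v, 'c) ty"
  shows "organized (cap_paths t) \<and> cap_paths t =\<^sub>T t"
proof -
  obtain ps where ps: "set ps = paths t" and cap: "cap_paths t = inter_list ps"
    using cap_paths_eq_inter_list by blast
  have "organized (inter_list ps)"
    unfolding organized_def using ps is_path_paths by blast
  moreover have "inter_list ps \<le>\<^sub>T t"
    using le_if_le_paths ps inter_list_le by blast
  moreover have "t \<le>\<^sub>T inter_list ps"
    using le_inter_list le_paths ps by blast
  ultimately show ?thesis unfolding cap ty_eq_def by blast
qed

end
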